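(* Let $N\geqslant 2$, $c_0<c_1<\dots<c_N$ in $\mathbb{R}$, and let $f:[c_0,c_N]\to[c_0,c_N]$ be a piecewise contracting map with contraction pieces $X_1=[c_0,c_1)$, $X_2=(c_1,c_2),\dots,X_N=(c_{N-1},c_N]$ which satisfies the separation property. Suppose there exists $i\in\{1,\dots,N-1\}$ such that (1) for some $j\in\{i,i+1\}$, $f_j(c_i)\in\widetilde X$ and $\{f^n(f_j(c_i))\}_{n\in\mathbb{N}}$ is dense in $\Lambda$; and (2) $c_i\in\Delta_{lr}(x_0)$ for some $x_0\in\widetilde X$. Then for any $\epsilon>0$ and any $y\in\Lambda$ such that $\Lambda\cap(y,y+\nu)\neq\emptyset$ for all $\nu>0$ (resp. $\Lambda\cap(y-\nu,y)\neq\emptyset$ for all $\nu>0$), there exists $l\geqslant 0$ with $f^l(x_0)\in(y,y+\epsilon)$ (resp. $f^l(x_0)\in(y-\epsilon,y)$).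
   Context: $\Delta=\{c_1,\dots,c_{N-1}\}$. Piecewise contracting: $f$ is discontinuous at each $c_i$, $1\leqslant i\leqslant N-1$, and there is $\lambda\in(0,1)$ with $|f(x)-f(y)|\leqslant\lambda|x-y|$ for $x,y$ in the same $X_i$; $f_i:\overline{X_i}\to[c_0,c_N]$ is the continuous extension of $f|_{X_i}$. Separation property: each $f_i$ injective and $f_i(\overline{X_i})\cap f_j(\overline{X_j})=\emptyset$ for $i\neq j$. $\widetilde X:=\bigcap_{n\geqslant0}f^{-n}([c_0,c_N]\setminus\Delta)$. Atoms: $F_i(A):=\overline{f(A\cap X_i)}$, $A_{i_1\dots i_n}:=F_{i_n}\circ\dots\circ F_{i_1}([c_0,c_N])$ is an atom of generation $n$ if non-empty; $\mathcal{A}_n$ is their set; the attractor is $\Lambda:=\bigcap_{n\geqslant1}\bigcup_{A\in\mathcal{A}_n}A$; $\mathcal{A}_n(x):=\{A\in\mathcal{A}_n:\exists t\in\mathbb{N}, f^{t+n}(x)\in A\}$. $c_i\in\Delta_{lr}(x)$ means: for every $n\geqslant1$ there is $A\in\mathcal{A}_n(x)$ with $c_i\in A$, $f^{t+n}(x)\in A\cap X_i$ and $f^{t'+n}(x)\in A\cap X_{i+1}$ for some $t,t'\in\mathbb{N}$. *)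

theory Defs
  imports "HOL-Analysis.Analysis"
begin

definition piece :: "(nat \<Rightarrow> real) \<Rightarrow> nat \<Rightarrow> nat \<Rightarrow> real set" where
  "piece c N i =
     (if i = 1 then {c 0..<c 1}
      else if i = N then {c (N - 1)<..c N}
      else {c (i - 1)<..<c i})"

definition disc_set :: "(nat \<Rightarrow> real) \<Rightarrow> nat \<Rightarrow> real set" where
  "disc_set c N = c ` {1..N - 1}"

definition piece_ext :: "(nat \<Rightarrow> real) \<Rightarrow> nat \<Rightarrow> (real \<Rightarrow> real) \<Rightarrow> nat \<Rightarrow> real \<Rightarrow> real" where
  "piece_ext c N f i x = Lim (at x within piece c N i) f"

definition piecewise_contracting :: "(nat \<Rightarrow> real) \<Rightarrow> nat \<Rightarrow> (real \<Rightarrow> real) \<Rightarrow> bool" where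
  "piecewise_contracting c N f \<longleftrightarrow>
     f ` {c 0..c N} \<subseteq> {c 0..c N} \<and>
     (\<forall>i\<in>{1..N - 1}. \<not> continuous (at (c i) within {c 0..c N}) f) \<and>
     (\<exists>lam. 0 < lam \<and> lam < 1 \<and>
        (\<forall>i\<in>{1..N}. \<forall>x\<in>piece c N i. \<forall>y\<in>piece c N i. \<bar>f x - f y\<bar> \<le> lam * \<bar>x - y\<bar>))"

definition separation :: "(nat \<Rightarrow> real) \<Rightarrow> nat \<Rightarrow> (real \<Rightarrow> real) \<Rightarrow> bool" where
  "separation c N f \<longleftrightarrow>
     (\<forall>i\<in>{1..N}. inj_on (piece_ext c N f i) (closure (piece c N i))) \<and>
     (\<forall>i\<in>{1..N}. \<forall>j\<in>{1..N}. i \<noteq> j \<longrightarrow>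
        piece_ext c N f i ` closure (piece c N i) \<inter> piece_ext c N f j ` closure (piece c N j) = {})"

definition Xtilde :: "(nat \<Rightarrow> real) \<Rightarrow> nat \<Rightarrow> (real \<Rightarrow> real) \<Rightarrow> real set" where
  "Xtilde c N f = {x. \<forall>n. (f ^^ n) x \<in> {c 0..c N} - disc_set c N}"

definition Fmap :: "(nat \<Rightarrow> real) \<Rightarrow> nat \<Rightarrow> (real \<Rightarrow> real) \<Rightarrow> nat \<Rightarrow> real set \<Rightarrow> real set" where
  "Fmap c N f i A = closure (f ` (A \<inter> piece c N i))"

text \<open>A_{i_1...i_n} = F_{i_n} o ... o F_{i_1}([c0,cN]); the word is the list [i_1,...,i_n].\<close>
definition atom :: "(nat \<Rightarrow> real) \<Rightarrow> nat \<Rightarrow> (real \<Rightarrow> real) \<Rightarrow> nat list \<Rightarrow> real set" where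
  "atom c N f w = fold (Fmap c N f) w {c 0..c N}"

definition atoms :: "(nat \<Rightarrow> real) \<Rightarrow> nat \<Rightarrow> (real \<Rightarrow> real) \<Rightarrow> nat \<Rightarrow> real set set" where
  "atoms c N f n = {atom c N f w | w. length w = n \<and> set w \<subseteq> {1..N} \<and> atom c N f w \<noteq> {}}"

definition attractor :: "(nat \<Rightarrow> real) \<Rightarrow> nat \<Rightarrow> (real \<Rightarrow> real) \<Rightarrow> real set" where
  "attractor c N f = (\<Inter>n\<in>{1..}. \<Union>(atoms c N f n))"

definition atoms_of :: "(nat \<Rightarrow> real) \<Rightarrow> nat \<Rightarrow> (real \<Rightarrow> real) \<Rightarrow> nat \<Rightarrow> real \<Rightarrow> real set set" where
  "atoms_of c N f n x = {A \<in> atoms c N f n. \<exists>t. (f ^^ (t + n)) x \<in> A}"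

definition in_Delta_lr :: "(nat \<Rightarrow> real) \<Rightarrow> nat \<Rightarrow> (real \<Rightarrow> real) \<Rightarrow> nat \<Rightarrow> real \<Rightarrow> bool" where
  "in_Delta_lr c N f i x \<longleftrightarrow>
     (\<forall>n\<ge>1. \<exists>A\<in>atoms_of c N f n x. c i \<in> A \<and>
        (\<exists>t. (f ^^ (t + n)) x \<in> A \<inter> piece c N i) \<and>
        (\<exists>t'. (f ^^ (t' + n)) x \<in> A \<inter> piece c N (i + 1)))"

end

theory Submission
  imports Defs
begin

text \<open>Atoms of generation \<open>n\<close> have diameter at most \<open>\<lambda>\<^sup>n (c\<^sub>N - c\<^sub>0)\<close>, so \<open>c\<^sub>i \<in> \<Delta>\<^sub>l\<^sub>r(x\<^sub>0)\<close>
  forces the orbit of \<open>x\<^sub>0\<close> to come arbitrarily close to \<open>c\<^sub>i\<close> from inside \<open>X\<^sub>j\<close>, for both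
  \<open>j = i\<close> and \<open>j = i + 1\<close>. Since \<open>f\<close> is continuous on \<open>X\<^sub>j\<close>, the next iterate is then close to
  \<open>p = f\<^sub>j(c\<^sub>i)\<close>. As \<open>p \<in> X~\<close>, every iterate \<open>f\<^sup>m\<close> is non-expanding on a small neighbourhood
  of \<open>p\<close>, so the orbit of \<open>x\<^sub>0\<close> shadows the orbit of \<open>p\<close> for any prescribed number of steps.
  The orbit of \<open>p\<close> is dense in \<open>\<Lambda>\<close>; hence the orbit of \<open>x\<^sub>0\<close> meets every open set meeting
  \<open>\<Lambda>\<close>, in particular \<open>(y, y + \<epsilon>)\<close> and \<open>(y - \<epsilon>, y)\<close> under the one-sided accumulation hypotheses.\<close>

lemma dist_le_on_closure:
  fixes S :: "'a::metric_space set"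
  assumes "\<forall>u\<in>S. \<forall>v\<in>S. dist u v \<le> R" "a \<in> closure S" "b \<in> closure S"
  shows "dist a b \<le> R"
proof -
  have "closure S \<subseteq> cball u R" if "u \<in> S" for u
    using assms(1) that by (intro closure_minimal) auto
  then have "S \<subseteq> cball b R"
    using assms(3) by (auto simp: cball_def dist_commute)
  then have "closure S \<subseteq> cball b R"
    by (simp add: closure_minimal)
  then show ?thesis
    using assms(2) by (auto simp: cball_def dist_commute)
qed

lemma funpow_mem_invariant:
  assumes "f ` S \<subseteq> S" "x \<in> S"
  shows "(f ^^ n) x \<in> S"
  by (induction n) (use assms in auto)

lemma piecewise_contracting_lipschitz:
  assumes "piecewise_contracting c N f"
  obtains lam where "0 < lam" "lam < 1" "\<And>k. k \<in> {1..N} \<Longrightarrow> lam-lipschitz_on (piece c N k) f"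
  using assms unfolding piecewise_contracting_def
  by (metis dist_real_def less_le lipschitz_onI)

lemma atom_dist_le:
  assumes lip: "\<And>k. k \<in> {1..N} \<Longrightarrow> lam-lipschitz_on (piece c N k) f"
    and "set w \<subseteq> {1..N}" "a \<in> atom c N f w" "b \<in> atom c N f w"
  shows "dist a b \<le> lam ^ length w * (c N - c 0)"
  using assms(2-)
proof (induction w arbitrary: a b rule: rev_induct)
  case Nil
  then show ?case by (auto simp: atom_def dist_real_def)
next
  case (snoc k w)
  let ?S = "f ` (atom c N f w \<inter> piece c N k)"
  have lam: "0 \<le> lam" and lip_k: "lam-lipschitz_on (piece c N k) f"
    using lip lipschitz_on_nonneg snoc.prems(1) by auto
  have bound: "dist u v \<le> lam ^ length (w @ [k]) * (c N - c 0)" if uv: "u \<in> ?S" "v \<in> ?S" for u v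
  proof -
    obtain x where x: "x \<in> atom c N f w" "x \<in> piece c N k" "u = f x"
      using uv(1) by blast
    obtain y where y: "y \<in> atom c N f w" "y \<in> piece c N k" "v = f y"
      using uv(2) by blast
    have "dist u v \<le> lam * dist x y"
      using lipschitz_onD[OF lip_k x(2) y(2)] x y by simp
    also have "\<dots> \<le> lam * (lam ^ length w * (c N - c 0))"
      using snoc.IH[OF _ x(1) y(1)] snoc.prems(1) lam by (simp add: mult_left_mono)
    finally show ?thesis by simp
  qed
  have "atom c N f (w @ [k]) = closure ?S"
    by (simp add: atom_def Fmap_def)
  with snoc.prems(2,3) show ?case
    using dist_le_on_closure[of ?S] bound by simp
qed

lemma boundary_point_of_piece:
  assumes mono: "strict_mono_on {0..N} c" and "i \<in> {1..N - 1}" and "j \<in> {i, i + 1}"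
  shows "c i \<in> closure (piece c N j) - piece c N j"
proof -
  have "c (i - 1) < c i" "c i < c (i + 1)"
    using assms(2) strict_mono_onD[OF mono, of "i - 1" i] strict_mono_onD[OF mono, of i "i + 1"]
    by auto
  then show ?thesis
    using assms(2,3) by (auto simp: piece_def)
qed

lemma piece_neighbourhood:
  assumes mono: "strict_mono_on {0..N} c" and N: "N \<ge> 2"
    and q: "q \<in> {c 0..c N}" "q \<notin> disc_set c N"
  obtains k r where "k \<in> {1..N}" "r > 0" "q \<in> piece c N k"
    "\<And>w. w \<in> {c 0..c N} \<Longrightarrow> \<bar>w - q\<bar> < r \<Longrightarrow> w \<in> piece c N k"
proof -
  have lt: "c a < c b" if "a < b" "b \<le> N" for a b
    using mono that unfolding strict_mono_on_def by auto
  define k where "k = (LEAST k. q \<le> c k)"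
  have qk: "q \<le> c k" and kN: "k \<le> N"
    unfolding k_def using q by (auto intro: LeastI[of _ N] Least_le)
  consider "k = 0" | "k \<noteq> 0" "q = c k" | "k \<noteq> 0" "q < c k"
    using qk by linarith
  then show ?thesis
  proof cases
    case 1
    then have "q = c 0" using qk q by auto
    then show ?thesis
      using N lt[of 0 1] by (intro that[of 1 "c 1 - c 0"]) (auto simp: piece_def)
  next
    case 2
    then have "k = N"
      using q(2) kN unfolding disc_set_def by auto
    then show ?thesis
      using N lt[of "N - 1" N] 2 by (intro that[of N "c N - c (N - 1)"]) (auto simp: piece_def)
  next
    case 3
    have "c (k - 1) < q"
      using not_less_Least[of "k - 1" "\<lambda>k. q \<le> c k"] 3 unfolding k_def by auto
    moreover have "{c (k - 1)<..<c k} \<subseteq> piece c N k"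
      unfolding piece_def by auto
    ultimately show ?thesis
      using 3 kN by (intro that[of k "min (q - c (k - 1)) (c k - q)"]) (auto simp: abs_less_iff)
  qed
qed

text \<open>The orbit of a point of \<open>X~\<close> never hits a discontinuity, so each iterate \<open>f\<^sup>m\<close> is a
  composition of contractions near it.\<close>
lemma funpow_locally_nonexpanding:
  assumes mono: "strict_mono_on {0..N} c" and N: "N \<ge> 2"
    and lip: "\<And>k. k \<in> {1..N} \<Longrightarrow> lam-lipschitz_on (piece c N k) f" and lam: "lam \<le> 1"
    and maps: "f ` {c 0..c N} \<subseteq> {c 0..c N}"
    and p: "p \<in> Xtilde c N f"
  shows "\<exists>r>0. \<forall>w\<in>{c 0..c N}. \<bar>w - p\<bar> < r \<longrightarrow> \<bar>(f ^^ m) w - (f ^^ m) p\<bar> \<le> \<bar>w - p\<bar>"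
proof (induction m)
  case 0
  then show ?case by (auto intro: exI[of _ 1])
next
  case (Suc m)
  then obtain r where r: "r > 0"
    "\<forall>w\<in>{c 0..c N}. \<bar>w - p\<bar> < r \<longrightarrow> \<bar>(f ^^ m) w - (f ^^ m) p\<bar> \<le> \<bar>w - p\<bar>"
    by blast
  have "(f ^^ m) p \<in> {c 0..c N}" "(f ^^ m) p \<notin> disc_set c N"
    using p unfolding Xtilde_def by auto
  then obtain k r' where k: "k \<in> {1..N}" "r' > 0" "(f ^^ m) p \<in> piece c N k"
    and near: "\<And>w. w \<in> {c 0..c N} \<Longrightarrow> \<bar>w - (f ^^ m) p\<bar> < r' \<Longrightarrow> w \<in> piece c N k"
    using piece_neighbourhood[OF mono N] by blast
  show ?case
  proof (intro exI[of _ "min r r'"] conjI ballI impI)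
    show "0 < min r r'" using r k by auto
    fix w assume w: "w \<in> {c 0..c N}" "\<bar>w - p\<bar> < min r r'"
    have step: "\<bar>(f ^^ m) w - (f ^^ m) p\<bar> \<le> \<bar>w - p\<bar>" using r w by auto
    then have "(f ^^ m) w \<in> piece c N k"
      using near funpow_mem_invariant[OF maps w(1)] w(2) by auto
    then have "\<bar>f ((f ^^ m) w) - f ((f ^^ m) p)\<bar> \<le> lam * \<bar>(f ^^ m) w - (f ^^ m) p\<bar>"
      using lipschitz_onD[OF lip[OF k(1)]] k(3) by (simp add: dist_real_def)
    also have "\<dots> \<le> \<bar>(f ^^ m) w - (f ^^ m) p\<bar>"
      using lam lipschitz_on_nonneg[OF lip[OF k(1)]] by (simp add: mult_left_le_one_le)
    finally show "\<bar>(f ^^ Suc m) w - (f ^^ Suc m) p\<bar> \<le> \<bar>w - p\<bar>" using step by simp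
  qed
qed

lemma tendsto_piece_ext:
  assumes mono: "strict_mono_on {0..N} c" and "i \<in> {1..N - 1}" and j: "j \<in> {i, i + 1}"
    and lip: "lam-lipschitz_on (piece c N j) f"
  shows "(f \<longlongrightarrow> piece_ext c N f j (c i)) (at (c i) within piece c N j)"
proof -
  have ci: "c i \<in> closure (piece c N j) - piece c N j"
    using boundary_point_of_piece[OF mono assms(2) j] .
  obtain l where l: "(f \<longlongrightarrow> l) (at (c i) within piece c N j)"
    using uniformly_continuous_on_extension_at_closure[OF lipschitz_on_uniformly_continuous[OF lip]] ci
    by blast
  have "\<not> trivial_limit (at (c i) within piece c N j)"
    using ci unfolding trivial_limit_within closure_def by auto
  then show ?thesis
    using l tendsto_Lim unfolding piece_ext_def by metis
qed

lemma contraction_pow_lt: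
  fixes lam D th :: real
  assumes "0 < lam" "lam < 1" "0 \<le> D" "0 < th"
  obtains n where "n \<ge> 1" "lam ^ n * D < th"
proof -
  obtain n0 where n0: "lam ^ n0 < th / (D + 1)"
    using real_arch_pow_inv[of "th / (D + 1)" lam] assms by auto
  have "lam ^ Suc n0 * D \<le> lam ^ n0 * (D + 1)"
    using assms by (intro mult_mono) (auto simp: mult_left_le_one_le)
  also have "\<dots> < th"
    using n0 assms by (simp add: pos_less_divide_eq)
  finally show ?thesis
    using that[of "Suc n0"] by simp
qed

text \<open>Only one of the two sides \<open>X\<^sub>i\<close>, \<open>X\<^sub>i\<^sub>+\<^sub>1\<close> of \<open>c\<^sub>i\<close> is needed here; \<open>\<Delta>\<^sub>l\<^sub>r\<close> provides both.\<close>
lemma Delta_lr_orbit_approaches: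
  assumes lam: "0 < lam" "lam < 1"
    and lip: "\<And>k. k \<in> {1..N} \<Longrightarrow> lam-lipschitz_on (piece c N k) f"
    and mono: "strict_mono_on {0..N} c" and N: "N \<ge> 1"
    and j: "j \<in> {i, i + 1}" and Dlr: "in_Delta_lr c N f i x0" and "th > 0"
  obtains k where "(f ^^ k) x0 \<in> piece c N j" "\<bar>(f ^^ k) x0 - c i\<bar> < th"
proof -
  have "c 0 < c N" using mono N unfolding strict_mono_on_def by auto
  then obtain n where n: "n \<ge> 1" "lam ^ n * (c N - c 0) < th"
    using contraction_pow_lt[OF lam] \<open>th > 0\<close> by (metis diff_ge_0_iff_ge less_le_not_le)
  then obtain A t where A: "A \<in> atoms c N f n" "c i \<in> A"
    and t: "(f ^^ (t + n)) x0 \<in> A \<inter> piece c N j"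
    using Dlr j unfolding in_Delta_lr_def atoms_of_def by blast
  obtain w where w: "A = atom c N f w" "length w = n" "set w \<subseteq> {1..N}"
    using A(1) unfolding atoms_def by blast
  have "\<bar>(f ^^ (t + n)) x0 - c i\<bar> \<le> lam ^ n * (c N - c 0)"
    using atom_dist_le[OF lip w(3)] w A(2) t by (fastforce simp: dist_real_def)
  then show ?thesis
    using that[of "t + n"] t n by simp
qed

lemma orbit_meets_open_set_meeting_attractor:
  assumes N: "N \<ge> 2" and mono: "strict_mono_on {0..N} c"
    and pc: "piecewise_contracting c N f"
    and i: "i \<in> {1..N - 1}" and j: "j \<in> {i, i + 1}"
    and pX: "piece_ext c N f j (c i) \<in> Xtilde c N f"
    and dense: "attractor c N f \<subseteq> closure (range (\<lambda>n. (f ^^ n) (piece_ext c N f j (c i))))"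
    and x0: "x0 \<in> Xtilde c N f" and Dlr: "in_Delta_lr c N f i x0"
    and U: "open U" "z \<in> U" "z \<in> attractor c N f"
  shows "\<exists>l. (f ^^ l) x0 \<in> U"
proof -
  define p where "p = piece_ext c N f j (c i)"
  obtain lam where lam: "0 < lam" "lam < 1"
    and lip: "\<And>k. k \<in> {1..N} \<Longrightarrow> lam-lipschitz_on (piece c N k) f"
    using piecewise_contracting_lipschitz[OF pc] by blast
  have maps: "f ` {c 0..c N} \<subseteq> {c 0..c N}"
    using pc unfolding piecewise_contracting_def by blast
  have "z \<in> closure (range (\<lambda>n. (f ^^ n) p))"
    using dense U(3) unfolding p_def by blast
  then obtain m where "(f ^^ m) p \<in> U"
    using U(1,2) unfolding closure_iff_nhds_not_empty by blast
  then obtain e where e: "e > 0" "ball ((f ^^ m) p) e \<subseteq> U"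
    using U(1) openE by blast
  obtain r where r: "r > 0"
    "\<forall>w\<in>{c 0..c N}. \<bar>w - p\<bar> < r \<longrightarrow> \<bar>(f ^^ m) w - (f ^^ m) p\<bar> \<le> \<bar>w - p\<bar>"
    using funpow_locally_nonexpanding[OF mono N lip _ maps pX[folded p_def]] lam by auto
  have jN: "j \<in> {1..N}" using i j by auto
  have "\<forall>\<^sub>F x in at (c i) within piece c N j. dist (f x) p < min e r"
    using tendsto_piece_ext[OF mono i j lip[OF jN]] e(1) r(1)
    unfolding tendsto_iff p_def by (simp add: eventually_conj_iff)
  then obtain th where th: "th > 0"
    "\<And>x. x \<in> piece c N j \<Longrightarrow> x \<noteq> c i \<Longrightarrow> dist x (c i) < th \<Longrightarrow> dist (f x) p < min e r"
    unfolding eventually_at by blast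
  obtain k where k: "(f ^^ k) x0 \<in> piece c N j" "\<bar>(f ^^ k) x0 - c i\<bar> < th"
    using Delta_lr_orbit_approaches[OF lam lip mono _ j Dlr th(1)] N by auto
  have "(f ^^ k) x0 \<noteq> c i"
    using k(1) boundary_point_of_piece[OF mono i j] by auto
  then have close: "\<bar>(f ^^ Suc k) x0 - p\<bar> < min e r"
    using th(2)[OF k(1)] k(2) by (simp add: dist_real_def)
  have "(f ^^ Suc k) x0 \<in> {c 0..c N}"
    using funpow_mem_invariant[OF maps] x0 unfolding Xtilde_def by blast
  then have "\<bar>(f ^^ m) ((f ^^ Suc k) x0) - (f ^^ m) p\<bar> < e"
    using r(2) close by fastforce
  moreover have "(f ^^ m) ((f ^^ Suc k) x0) = (f ^^ (m + Suc k)) x0"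
    by (metis comp_apply funpow_add)
  ultimately have "(f ^^ (m + Suc k)) x0 \<in> ball ((f ^^ m) p) e"
    by (simp add: dist_real_def abs_minus_commute)
  then show ?thesis
    using e(2) by blast
qed

theorem lemma6:
  fixes c :: "nat \<Rightarrow> real" and N :: nat and f :: "real \<Rightarrow> real" and i :: nat and x0 :: real
  assumes "N \<ge> 2"
    and "strict_mono_on {0..N} c"
    and "piecewise_contracting c N f"
    and "separation c N f"
    and "i \<in> {1..N - 1}"
    and "\<exists>j\<in>{i, i + 1}. piece_ext c N f j (c i) \<in> Xtilde c N f \<and>
           attractor c N f \<subseteq> closure (range (\<lambda>n. (f ^^ n) (piece_ext c N f j (c i))))"
    and "x0 \<in> Xtilde c N f"
    and "in_Delta_lr c N f i x0"
  shows "\<forall>\<epsilon>>0. \<forall>y\<in>attractor c N f.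
           ((\<forall>\<nu>>0. attractor c N f \<inter> {y<..<y + \<nu>} \<noteq> {}) \<longrightarrow>
              (\<exists>l. (f ^^ l) x0 \<in> {y<..<y + \<epsilon>})) \<and>
           ((\<forall>\<nu>>0. attractor c N f \<inter> {y - \<nu><..<y} \<noteq> {}) \<longrightarrow>
              (\<exists>l. (f ^^ l) x0 \<in> {y - \<epsilon><..<y}))"
proof -
  obtain j where j: "j \<in> {i, i + 1}" "piece_ext c N f j (c i) \<in> Xtilde c N f"
    "attractor c N f \<subseteq> closure (range (\<lambda>n. (f ^^ n) (piece_ext c N f j (c i))))"
    using assms(6) by blast
  have visits: "\<exists>l. (f ^^ l) x0 \<in> U"
    if "open U" "z \<in> U" "z \<in> attractor c N f" for U z
    using orbit_meets_open_set_meeting_attractor[OF assms(1-3,5) j assms(7,8) that] .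
  show ?thesis
  proof (intro allI impI ballI conjI)
    fix \<epsilon> :: real and y assume "\<epsilon> > 0"
    show "\<exists>l. (f ^^ l) x0 \<in> {y<..<y + \<epsilon>}"
      if right: "\<forall>\<nu>>0. attractor c N f \<inter> {y<..<y + \<nu>} \<noteq> {}"
    proof -
      obtain z where "z \<in> attractor c N f" "z \<in> {y<..<y + \<epsilon>}"
        using right \<open>\<epsilon> > 0\<close> by blast
      then show ?thesis
        using visits[of "{y<..<y + \<epsilon>}" z] by simp
    qed
    show "\<exists>l. (f ^^ l) x0 \<in> {y - \<epsilon><..<y}"
      if left: "\<forall>\<nu>>0. attractor c N f \<inter> {y - \<nu><..<y} \<noteq> {}"
    proof -
      obtain z where "z \<in> attractor c N f" "z \<in> {y - \<epsilon><..<y}"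
        using left \<open>\<epsilon> > 0\<close> by blast
      then show ?thesis
        using visits[of "{y - \<epsilon><..<y}" z] by simp
    qed
  qed
qed

end
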